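(* Let $n\ge1$ and let $\mathfrak h_{2n+2}$ be the real Lie algebra with basis $X^1,\dots,X^{2n+2}$ whose only nonzero brackets are $[X^i,X^{n+1}]=X^{n+1+i}$ for $1\le i\le n$, with dual basis $\alpha_1,\dots,\alpha_{2n+2}$, so that $d\alpha_i=0$ for $1\le i\le n+1$ and $i=2n+2$, and $d\alpha_{n+1+i}=\alpha_{n+1}\wedge\alpha_i$ for $1\le i\le n$. Let $g=\sum_i\alpha_i\otimes\alpha_i$ (so $X^1,\dots,X^{2n+2}$ is orthonormal) and let $J$ be an endomorphism of $\mathfrak h_{2n+2}$ with $J^2=-\mathrm{Id}$ and $g(JX,JY)=g(X,Y)$. Write $JX^i=\sum_{j}a^i_jX^j$ and let $\mathcal J$ be the $(2n+2)\times(2n+2)$ matrix whose $(i,j)$ entry is $a^i_j$ (it is orthogonal and antisymmetric). Let $F=\frac12\sum_{i,j}a^i_j\,\alpha_i\wedge\alpha_j$ be the Kähler form, viewed as a left-invariant 2-form on the corresponding simply connected Lie group. Then $dF=0$ if and only if $$\mathcal J=\begin{pmatrix} O & A\\ -{}^tA & O\end{pmatrix}$$ with $O$ the $(n+1)\times(n+1)$ zero matrix and $A$ an orthogonal $(n+1)\times(n+1)$ matrix whose upper-left $n\times n$ block $B$ (entries $a^i_{n+1+j}$, $1\le i,j\le n$) is symmetric.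
   Context: Here $d$ is the exterior derivative of left-invariant forms, determined by $d\alpha(X,Y)=-\alpha([X,Y])$ for left-invariant 1-forms, equivalently by the stated structure equations. *)

theory Defs
  imports Complex_Main
begin

text \<open>Elements of the Lie algebra h_{2n+2} are coordinate functions
  X :: nat \<Rightarrow> real w.r.t. the basis X^1,...,X^{2n+2}, i.e. X k is the
  coefficient of X^k; coordinates outside {1..2n+2} are required to vanish.\<close>

definition dimh :: "nat \<Rightarrow> nat" where
  "dimh n = 2 * n + 2"

definition hvec :: "nat \<Rightarrow> (nat \<Rightarrow> real) \<Rightarrow> bool" where
  "hvec n X \<longleftrightarrow> (\<forall>k. k \<notin> {1..dimh n} \<longrightarrow> X k = 0)"

text \<open>Structure constants: [X^i, X^j] = sum_k c i j k X^k; the only nonzero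
  brackets are [X^i, X^{n+1}] = X^{n+1+i} (1 \<le> i \<le> n) and their negatives.\<close>
definition hconst :: "nat \<Rightarrow> nat \<Rightarrow> nat \<Rightarrow> nat \<Rightarrow> real" where
  "hconst n i j k =
     (if 1 \<le> i \<and> i \<le> n \<and> j = n + 1 \<and> k = n + 1 + i then 1
      else if 1 \<le> j \<and> j \<le> n \<and> i = n + 1 \<and> k = n + 1 + j then -1
      else 0)"

definition hbracket :: "nat \<Rightarrow> (nat \<Rightarrow> real) \<Rightarrow> (nat \<Rightarrow> real) \<Rightarrow> (nat \<Rightarrow> real)" where
  "hbracket n X Y = (\<lambda>k. if k \<in> {1..dimh n} then
      (\<Sum>i\<in>{1..dimh n}. \<Sum>j\<in>{1..dimh n}. X i * Y j * hconst n i j k) else 0)"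

definition hmetric :: "nat \<Rightarrow> (nat \<Rightarrow> real) \<Rightarrow> (nat \<Rightarrow> real) \<Rightarrow> real" where
  "hmetric n X Y = (\<Sum>i\<in>{1..dimh n}. X i * Y i)"

text \<open>The endomorphism J determined by J X^i = sum_j a^i_j X^j, with a i j = a^i_j.\<close>
definition Jop :: "nat \<Rightarrow> (nat \<Rightarrow> nat \<Rightarrow> real) \<Rightarrow> (nat \<Rightarrow> real) \<Rightarrow> (nat \<Rightarrow> real)" where
  "Jop n a X = (\<lambda>j. if j \<in> {1..dimh n} then (\<Sum>i\<in>{1..dimh n}. X i * a i j) else 0)"

text \<open>Wedge of 1-forms: (alpha \<and> beta)(X,Y) = alpha(X) beta(Y) - alpha(Y) beta(X).
  The Kaehler form F = 1/2 sum_{i,j} a^i_j alpha_i \<and> alpha_j as a bilinear map.\<close>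
definition kahler_form :: "nat \<Rightarrow> (nat \<Rightarrow> nat \<Rightarrow> real) \<Rightarrow> (nat \<Rightarrow> real) \<Rightarrow> (nat \<Rightarrow> real) \<Rightarrow> real" where
  "kahler_form n a X Y =
     (1/2) * (\<Sum>i\<in>{1..dimh n}. \<Sum>j\<in>{1..dimh n}. a i j * (X i * Y j - X j * Y i))"

text \<open>Exterior derivative of a left-invariant 2-form (Chevalley-Eilenberg formula,
  the convention extending d alpha(X,Y) = - alpha([X,Y])).\<close>
definition d2 :: "nat \<Rightarrow> ((nat \<Rightarrow> real) \<Rightarrow> (nat \<Rightarrow> real) \<Rightarrow> real)
                 \<Rightarrow> (nat \<Rightarrow> real) \<Rightarrow> (nat \<Rightarrow> real) \<Rightarrow> (nat \<Rightarrow> real) \<Rightarrow> real" where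
  "d2 n \<omega> X Y Z = - \<omega> (hbracket n X Y) Z + \<omega> (hbracket n X Z) Y - \<omega> (hbracket n Y Z) X"

end

theory Submission
  imports Defs
begin

text \<open>Since \<open>J\<^sup>2 = -1\<close> and \<open>J\<close> is orthogonal, its matrix \<open>a\<close> is orthogonal and
  skew-symmetric, so \<open>F(X,Y)\<close> is the sum of \<open>a(i,j) X_i Y_j\<close>.  As the only brackets
  are \<open>[X^i, X^(n+1)] = X^(n+1+i)\<close>, for \<open>i \<le> n\<close> and \<open>r \<noteq> n+1\<close> one finds
  \<open>dF(X^i, X^(n+1), X^r) = [r \<le> n] a(n+1+r, i) - a(n+1+i, r)\<close>, so
  \<open>dF = 0\<close> forces the lower right block to vanish and \<open>B\<close> to be symmetric.  Conversely,
  under these two conditions \<open>dF(X,Y,Z)\<close> pairs a coefficient symmetric in two indices with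
  an expression alternating in them, hence vanishes.  Finally, an orthogonal skew-symmetric
  matrix whose lower right block vanishes also has vanishing upper left block: the rows of
  the upper half and the columns of the upper right block are unit vectors, so the squares
  of the upper left entries sum to \<open>(n+1) - (n+1) = 0\<close>.\<close>

definition skew_symmetric_on :: "'i set \<Rightarrow> ('i \<Rightarrow> 'i \<Rightarrow> 'a::uminus) \<Rightarrow> bool" where
  "skew_symmetric_on I a \<longleftrightarrow> (\<forall>i\<in>I. \<forall>j\<in>I. a j i = - a i j)"

lemma skew_symmetric_onD: "skew_symmetric_on I a \<Longrightarrow> i \<in> I \<Longrightarrow> j \<in> I \<Longrightarrow> a j i = - a i j"
  unfolding skew_symmetric_on_def by blast

lemma skew_symmetric_if_orthogonal_square_minus_one:
  fixes a :: "'i \<Rightarrow> 'i \<Rightarrow> 'a::comm_ring_1"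
  assumes "finite I"
    and sq: "\<And>p q. p \<in> I \<Longrightarrow> q \<in> I \<Longrightarrow> (\<Sum>k\<in>I. a p k * a k q) = (if p = q then -1 else 0)"
    and orth: "\<And>p q. p \<in> I \<Longrightarrow> q \<in> I \<Longrightarrow> (\<Sum>k\<in>I. a p k * a q k) = (if p = q then 1 else 0)"
  shows "skew_symmetric_on I a"
  unfolding skew_symmetric_on_def
proof (intro ballI)
  fix i j assume i: "i \<in> I" and j: "j \<in> I"
  have "(\<Sum>k\<in>I. (\<Sum>l\<in>I. a i l * a l k) * a j k) = (\<Sum>k\<in>I. if i = k then - a j k else 0)"
    using i by (intro sum.cong) (simp_all add: sq)
  then have "- a j i = (\<Sum>k\<in>I. (\<Sum>l\<in>I. a i l * a l k) * a j k)"
    using \<open>finite I\<close> i by simp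
  also have "\<dots> = (\<Sum>k\<in>I. \<Sum>l\<in>I. a i l * (a l k * a j k))"
    by (simp add: sum_distrib_right mult.assoc)
  also have "\<dots> = (\<Sum>l\<in>I. a i l * (\<Sum>k\<in>I. a l k * a j k))"
    by (subst sum.swap) (simp add: sum_distrib_left)
  also have "\<dots> = (\<Sum>l\<in>I. if l = j then a i l else 0)"
    using j by (intro sum.cong) (simp_all add: orth)
  also have "\<dots> = a i j"
    using \<open>finite I\<close> j by simp
  finally show "a j i = - a i j" by (simp add: minus_equation_iff)
qed

lemma sum_split_halves:
  fixes g :: "nat \<Rightarrow> 'a::comm_monoid_add"
  shows "(\<Sum>l\<in>{1..2*m}. g l) = (\<Sum>l\<in>{1..m}. g l) + (\<Sum>j\<in>{1..m}. g (m + j))"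
proof -
  have "(\<Sum>l\<in>{1..m+m}. g l) = (\<Sum>l\<in>{1..m}. g l) + (\<Sum>l\<in>{m+1..m+m}. g l)"
    by (rule sum.ub_add_nat) simp
  also have "(\<Sum>l\<in>{m+1..m+m}. g l) = (\<Sum>j\<in>{1..m}. g (m + j))"
    using sum.shift_bounds_cl_nat_ivl[of g 1 m m] by (simp add: add.commute)
  finally show ?thesis by (simp add: mult_2)
qed

lemma sum_sum_antisym_eq_0:
  fixes f :: "'i \<Rightarrow> 'i \<Rightarrow> 'a::linordered_ab_group_add"
  assumes "\<And>t j. t \<in> A \<Longrightarrow> j \<in> A \<Longrightarrow> f t j = - f j t"
  shows "(\<Sum>t\<in>A. \<Sum>j\<in>A. f t j) = 0"
proof -
  have "(\<Sum>t\<in>A. \<Sum>j\<in>A. f t j) = (\<Sum>t\<in>A. \<Sum>j\<in>A. - f j t)"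
    by (intro sum.cong refl assms)
  also have "\<dots> = - (\<Sum>t\<in>A. \<Sum>j\<in>A. f j t)"
    by (simp only: sum_negf)
  also have "(\<Sum>t\<in>A. \<Sum>j\<in>A. f j t) = (\<Sum>j\<in>A. \<Sum>t\<in>A. f j t)"
    by (rule sum.swap)
  finally show ?thesis by simp
qed

subsection \<open>Orthogonal skew-symmetric matrices with a vanishing diagonal block\<close>

context
  fixes a :: "nat \<Rightarrow> nat \<Rightarrow> real" and m :: nat
  assumes skew: "skew_symmetric_on {1..2*m} a"
    and orth: "\<And>p q. p \<in> {1..2*m} \<Longrightarrow> q \<in> {1..2*m} \<Longrightarrow>
                 (\<Sum>l\<in>{1..2*m}. a p l * a q l) = (if p = q then 1 else 0)"
    and lower_right: "\<And>i j. i \<in> {1..m} \<Longrightarrow> j \<in> {1..m} \<Longrightarrow> a (m+i) (m+j) = 0"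
begin

lemma upper_right_columns_orthonormal:
  assumes i: "i \<in> {1..m}" and k: "k \<in> {1..m}"
  shows "(\<Sum>j\<in>{1..m}. a j (m+i) * a j (m+k)) = (if i = k then 1 else 0)"
proof -
  have "(if i = k then 1 else 0) = (\<Sum>l\<in>{1..2*m}. a (m+i) l * a (m+k) l)"
    using orth[of "m+i" "m+k"] i k by simp
  also have "\<dots> = (\<Sum>l\<in>{1..m}. a (m+i) l * a (m+k) l)"
    unfolding sum_split_halves using i k by (simp add: lower_right)
  also have "\<dots> = (\<Sum>j\<in>{1..m}. a j (m+i) * a j (m+k))"
  proof (rule sum.cong)
    fix j assume "j \<in> {1..m}"
    then have "a (m+i) j = - a j (m+i)" "a (m+k) j = - a j (m+k)"
      using i k by (auto intro: skew_symmetric_onD[OF skew])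
    then show "a (m+i) j * a (m+k) j = a j (m+i) * a j (m+k)" by simp
  qed simp
  finally show ?thesis ..
qed

lemma upper_left_block_zero:
  assumes i: "i \<in> {1..m}" and j: "j \<in> {1..m}"
  shows "a i j = 0"
proof -
  let ?M = "{1..m}"
  have row_norm: "(\<Sum>l\<in>?M. a p l * a p l) = 1 - (\<Sum>k\<in>?M. a p (m+k) * a p (m+k))"
    if "p \<in> ?M" for p
    using orth[of p p] that unfolding sum_split_halves by (simp add: eq_diff_eq)
  have "(\<Sum>p\<in>?M. \<Sum>l\<in>?M. a p l * a p l) = (\<Sum>p\<in>?M. 1 - (\<Sum>k\<in>?M. a p (m+k) * a p (m+k)))"
    using row_norm by (rule sum.cong[OF refl])
  also have "\<dots> = card ?M - (\<Sum>k\<in>?M. \<Sum>p\<in>?M. a p (m+k) * a p (m+k))"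
    by (simp add: sum_subtractf) (rule sum.swap)
  also have "(\<Sum>k\<in>?M. \<Sum>p\<in>?M. a p (m+k) * a p (m+k)) = (\<Sum>k\<in>?M. 1)"
    using upper_right_columns_orthonormal by (intro sum.cong) auto
  finally have "(\<Sum>p\<in>?M. \<Sum>l\<in>?M. a p l * a p l) = 0" by simp
  with i have "(\<Sum>l\<in>?M. a i l * a i l) = 0"
    by (simp add: sum_nonneg_eq_0_iff sum_nonneg)
  with j show ?thesis
    by (simp add: sum_nonneg_eq_0_iff)
qed

lemma upper_right_rows_orthonormal:
  assumes i: "i \<in> {1..m}" and k: "k \<in> {1..m}"
  shows "(\<Sum>j\<in>{1..m}. a i (m+j) * a k (m+j)) = (if i = k then 1 else 0)"
proof -
  have "(\<Sum>l\<in>{1..m}. a i l * a k l) = 0"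
    using upper_left_block_zero[OF i] by simp
  then show ?thesis
    using orth[of i k] i k unfolding sum_split_halves by simp
qed

end

subsection \<open>The Lie algebra and the Kaehler form in coordinates\<close>

lemma dimh_eq: "dimh n = 2 * (n+1)"
  by (simp add: dimh_def)

definition hbasis :: "nat \<Rightarrow> nat \<Rightarrow> real" where
  "hbasis p = (\<lambda>k. if k = p then 1 else 0)"

lemma hvec_hbasis: "p \<in> {1..dimh n} \<Longrightarrow> hvec n (hbasis p)"
  by (auto simp: hvec_def hbasis_def)

lemma sum_mult_hbasis: "finite A \<Longrightarrow> p \<in> A \<Longrightarrow> (\<Sum>j\<in>A. f j * hbasis p j) = f p"
  by (simp add: hbasis_def if_distrib[of "\<lambda>x. _ * x"] cong: if_cong)

lemma Jop_hbasis:
  "p \<in> {1..dimh n} \<Longrightarrow> Jop n a (hbasis p) = (\<lambda>j. if j \<in> {1..dimh n} then a p j else 0)"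
  by (simp add: Jop_def hbasis_def if_distrib[of "\<lambda>x. x * _"] cong: if_cong)

lemma hmetric_hbasis:
  "p \<in> {1..dimh n} \<Longrightarrow> q \<in> {1..dimh n} \<Longrightarrow>
    hmetric n (hbasis p) (hbasis q) = (if p = q then 1 else 0)"
  by (simp add: hmetric_def hbasis_def if_distrib[of "\<lambda>x. x * _"] cong: if_cong)

lemma matrix_of_orthogonal_complex_structure:
  assumes Jsq: "\<forall>X. hvec n X \<longrightarrow> Jop n a (Jop n a X) = (\<lambda>k. - X k)"
    and Jorth: "\<forall>X Y. hvec n X \<longrightarrow> hvec n Y \<longrightarrow> hmetric n (Jop n a X) (Jop n a Y) = hmetric n X Y"
    and p: "p \<in> {1..dimh n}" and q: "q \<in> {1..dimh n}"
  shows "(\<Sum>k\<in>{1..dimh n}. a p k * a k q) = (if p = q then -1 else 0)"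
    and "(\<Sum>k\<in>{1..dimh n}. a p k * a q k) = (if p = q then 1 else 0)"
proof -
  let ?I = "{1..dimh n}"
  have "Jop n a (Jop n a (hbasis p)) q = - hbasis p q"
    using Jsq hvec_hbasis[OF p] by simp
  moreover have "Jop n a (Jop n a (hbasis p)) q = (\<Sum>k\<in>?I. a p k * a k q)"
    using q unfolding Jop_hbasis[OF p] by (simp add: Jop_def cong: if_cong)
  ultimately show "(\<Sum>k\<in>?I. a p k * a k q) = (if p = q then -1 else 0)"
    by (auto simp: hbasis_def)
  have "hmetric n (Jop n a (hbasis p)) (Jop n a (hbasis q)) = hmetric n (hbasis p) (hbasis q)"
    using Jorth hvec_hbasis p q by blast
  then show "(\<Sum>k\<in>?I. a p k * a q k) = (if p = q then 1 else 0)"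
    unfolding Jop_hbasis[OF p] Jop_hbasis[OF q] hmetric_hbasis[OF p q]
    by (simp add: hmetric_def cong: if_cong)
qed

lemma hbracket_eq:
  "hbracket n X Y = (\<lambda>k. if k \<in> {n+2..2*n+1}
      then X (k - (n+1)) * Y (n+1) - X (n+1) * Y (k - (n+1)) else 0)"
proof
  fix k
  let ?I = "{1..dimh n}"
  show "hbracket n X Y k = (if k \<in> {n+2..2*n+1}
      then X (k - (n+1)) * Y (n+1) - X (n+1) * Y (k - (n+1)) else 0)"
  proof (cases "k \<in> {n+2..2*n+1}")
    case True
    then have "X i * Y j * hconst n i j k =
        (if j = n+1 then if i = k - (n+1) then X i * Y j else 0 else 0)
      - (if j = k - (n+1) then if i = n+1 then X i * Y j else 0 else 0)" for i j
      by (auto simp: hconst_def)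
    moreover have "k \<in> ?I" "k - (n+1) \<in> ?I" "n+1 \<in> ?I"
      using True by (auto simp: dimh_def)
    ultimately show ?thesis
      using True unfolding hbracket_def by (simp add: sum_subtractf)
  next
    case False
    then have "hconst n i j k = 0" for i j by (auto simp: hconst_def)
    then show ?thesis unfolding hbracket_def if_not_P[OF False] by simp
  qed
qed

lemma kahler_form_skew:
  assumes skew: "skew_symmetric_on {1..dimh n} a"
  shows "kahler_form n a X Y = (\<Sum>i\<in>{1..dimh n}. \<Sum>j\<in>{1..dimh n}. a i j * X i * Y j)"
proof -
  let ?I = "{1..dimh n}"
  have "(\<Sum>i\<in>?I. \<Sum>j\<in>?I. a i j * (X j * Y i)) = (\<Sum>j\<in>?I. \<Sum>i\<in>?I. a i j * (X j * Y i))"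
    by (rule sum.swap)
  also have "\<dots> = (\<Sum>j\<in>?I. \<Sum>i\<in>?I. - (a j i * X j * Y i))"
  proof (intro sum.cong refl)
    fix i j assume "i \<in> ?I" "j \<in> ?I"
    then have "a i j = - a j i" using skew_symmetric_onD[OF skew] by blast
    then show "a i j * (X j * Y i) = - (a j i * X j * Y i)" by simp
  qed
  finally show ?thesis
    by (simp add: kahler_form_def right_diff_distrib sum_subtractf sum_negf mult.assoc)
qed

lemma kahler_form_hbracket:
  assumes skew: "skew_symmetric_on {1..dimh n} a"
  shows "kahler_form n a (hbracket n X Y) Z =
    (\<Sum>t\<in>{1..n}. (X t * Y (n+1) - X (n+1) * Y t) * (\<Sum>j\<in>{1..dimh n}. a (n+1+t) j * Z j))"
proof -
  let ?I = "{1..dimh n}" and ?K = "{n+2..2*n+1}"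
  let ?g = "\<lambda>i. (X (i - (n+1)) * Y (n+1) - X (n+1) * Y (i - (n+1))) * (\<Sum>j\<in>?I. a i j * Z j)"
  have "kahler_form n a (hbracket n X Y) Z = (\<Sum>i\<in>?I. if i \<in> ?K then ?g i else 0)"
    unfolding kahler_form_skew[OF skew] hbracket_eq
    by (intro sum.cong refl) (simp add: sum_distrib_left sum_distrib_right ac_simps)
  also have "\<dots> = (\<Sum>i\<in>?I \<inter> ?K. ?g i)"
    by (rule sum.inter_restrict[symmetric]) simp
  also have "?I \<inter> ?K = ?K"
    by (auto simp: dimh_def)
  also have "?K = {1 + (n+1)..n + (n+1)}"
    by (intro arg_cong2[where f = atLeastAtMost]) simp_all
  also have "(\<Sum>i\<in>{1 + (n+1)..n + (n+1)}. ?g i) = (\<Sum>t\<in>{1..n}. ?g (t + (n+1)))"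
    by (rule sum.shift_bounds_cl_nat_ivl)
  finally show ?thesis by (simp add: add.commute)
qed

lemma d2_kahler_form_hbasis:
  assumes skew: "skew_symmetric_on {1..dimh n} a"
    and i: "i \<in> {1..n}" and r: "r \<in> {1..dimh n}" "r \<noteq> n+1"
  shows "d2 n (kahler_form n a) (hbasis i) (hbasis (n+1)) (hbasis r) =
    (if r \<le> n then a (n+1+r) i else 0) - a (n+1+i) r"
proof -
  have fin: "finite {1..dimh n}" by simp
  have iI: "i \<in> {1..dimh n}" using i by (simp add: dimh_def)
  show ?thesis
    using i r unfolding d2_def kahler_form_hbracket[OF skew] sum_mult_hbasis[OF fin r(1)]
      sum_mult_hbasis[OF fin iI]
    by (simp add: hbasis_def if_distrib[of "\<lambda>x. x * _"] sum_negf cong: if_cong)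
qed

definition kahler_closed :: "nat \<Rightarrow> (nat \<Rightarrow> nat \<Rightarrow> real) \<Rightarrow> bool" where
  "kahler_closed n a \<longleftrightarrow>
    (\<forall>X Y Z. hvec n X \<longrightarrow> hvec n Y \<longrightarrow> hvec n Z \<longrightarrow> d2 n (kahler_form n a) X Y Z = 0)"

lemma kahler_closed_hbasis:
  assumes skew: "skew_symmetric_on {1..dimh n} a" and closed: "kahler_closed n a"
    and i: "i \<in> {1..n}" and r: "r \<in> {1..dimh n}" "r \<noteq> n+1"
  shows "a (n+1+i) r = (if r \<le> n then a (n+1+r) i else 0)"
proof -
  have "hvec n (hbasis i)" "hvec n (hbasis (n+1))" "hvec n (hbasis r)"
    using i r by (auto intro: hvec_hbasis simp: dimh_def)
  with closed have "d2 n (kahler_form n a) (hbasis i) (hbasis (n+1)) (hbasis r) = 0"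
    unfolding kahler_closed_def by blast
  then show ?thesis
    unfolding d2_kahler_form_hbasis[OF skew i r] by simp
qed

lemma kahler_closed_lower_right_zero:
  assumes skew: "skew_symmetric_on {1..dimh n} a" and closed: "kahler_closed n a"
    and i: "i \<in> {1..n+1}" and j: "j \<in> {1..n+1}"
  shows "a (n+1+i) (n+1+j) = 0"
proof -
  have upper: "a (n+1+i') (n+1+j') = 0" if "i' \<in> {1..n}" "j' \<in> {1..n+1}" for i' j'
    using kahler_closed_hbasis[OF skew closed, of i' "n+1+j'"] that by (simp add: dimh_def)
  consider "i \<le> n" | "i = n+1" "j \<le> n" | "i = n+1" "j = n+1"
    using i j by fastforce
  then show ?thesis
  proof cases
    case 1
    with i j show ?thesis by (intro upper) auto
  next
    case 2
    then have "a (n+1+i) (n+1+j) = - a (n+1+j) (n+1+i)"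
      using j by (intro skew_symmetric_onD[OF skew]) (auto simp: dimh_def)
    also have "a (n+1+j) (n+1+i) = 0"
      using 2 j by (intro upper) auto
    finally show ?thesis by simp
  next
    case 3
    have "a (n+1+i) (n+1+i) = - a (n+1+i) (n+1+i)"
      using i by (intro skew_symmetric_onD[OF skew]) (auto simp: dimh_def)
    with 3 show ?thesis by simp
  qed
qed

lemma kahler_closed_symmetric_block:
  assumes skew: "skew_symmetric_on {1..dimh n} a" and closed: "kahler_closed n a"
    and i: "i \<in> {1..n}" and j: "j \<in> {1..n}"
  shows "a i (n+1+j) = a j (n+1+i)"
proof -
  have mem: "i \<in> {1..dimh n}" "j \<in> {1..dimh n}" "n+1+i \<in> {1..dimh n}" "n+1+j \<in> {1..dimh n}"
    using i j by (auto simp: dimh_def)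
  have "a i (n+1+j) = - a (n+1+j) i"
    using skew_symmetric_onD[OF skew mem(4) mem(1)] by simp
  also have "a (n+1+j) i = a (n+1+i) j"
    using kahler_closed_hbasis[OF skew closed j mem(1)] i by simp
  also have "- a (n+1+i) j = a j (n+1+i)"
    using skew_symmetric_onD[OF skew mem(2) mem(3)] by simp
  finally show ?thesis .
qed

lemma kahler_closed_if_blocks:
  assumes skew: "skew_symmetric_on {1..dimh n} a"
    and lower_right: "\<And>i j. i \<in> {1..n+1} \<Longrightarrow> j \<in> {1..n+1} \<Longrightarrow> a (n+1+i) (n+1+j) = 0"
    and symmetric: "\<And>i j. i \<in> {1..n} \<Longrightarrow> j \<in> {1..n} \<Longrightarrow> a i (n+1+j) = a j (n+1+i)"
  shows "kahler_closed n a"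
  unfolding kahler_closed_def
proof (intro allI impI)
  fix X Y Z :: "nat \<Rightarrow> real"
  let ?I = "{1..dimh n}"
  define Q where "Q t j =
      (X t * Y (n+1) - X (n+1) * Y t) * Z j - (X t * Z (n+1) - X (n+1) * Z t) * Y j
    + (Y t * Z (n+1) - Y (n+1) * Z t) * X j" for t j
  have inner: "(\<Sum>j\<in>?I. a (n+1+t) j * Q t j) = (\<Sum>j\<in>{1..n}. a (n+1+t) j * Q t j)"
    if "t \<in> {1..n}" for t
  proof -
    have "Q t (n+1) = 0" by (simp add: Q_def algebra_simps)
    moreover have "(\<Sum>j\<in>{1..n+1}. a (n+1+t) (n+1+j) * Q t (n+1+j)) = 0"
    proof (intro sum.neutral ballI)
      fix j assume "j \<in> {1..n+1}"
      with that have "a (n+1+t) (n+1+j) = 0" by (intro lower_right) auto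
      then show "a (n+1+t) (n+1+j) * Q t (n+1+j) = 0" by simp
    qed
    ultimately show ?thesis
      unfolding dimh_eq sum_split_halves by simp
  qed
  have "d2 n (kahler_form n a) X Y Z = - (\<Sum>t\<in>{1..n}. \<Sum>j\<in>?I. a (n+1+t) j * Q t j)"
    by (simp add: d2_def kahler_form_hbracket[OF skew] Q_def sum_distrib_left
        sum_subtractf sum.distrib sum_negf algebra_simps)
  also have "\<dots> = - (\<Sum>t\<in>{1..n}. \<Sum>j\<in>{1..n}. a (n+1+t) j * Q t j)"
    using inner by simp
  also have "(\<Sum>t\<in>{1..n}. \<Sum>j\<in>{1..n}. a (n+1+t) j * Q t j) = 0"
  proof (rule sum_sum_antisym_eq_0)
    fix t j assume t: "t \<in> {1..n}" and j: "j \<in> {1..n}"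
    have mem: "t \<in> ?I" "j \<in> ?I" "n+1+t \<in> ?I" "n+1+j \<in> ?I"
      using t j by (auto simp: dimh_def)
    have "a (n+1+t) j = a (n+1+j) t"
      using symmetric[OF j t] skew_symmetric_onD[OF skew mem(2) mem(3)]
        skew_symmetric_onD[OF skew mem(1) mem(4)] by simp
    moreover have "Q t j = - Q j t" by (simp add: Q_def algebra_simps)
    ultimately show "a (n+1+t) j * Q t j = - (a (n+1+j) t * Q j t)" by simp
  qed
  finally show "d2 n (kahler_form n a) X Y Z = 0" by simp
qed

theorem lemma3p2:
  fixes n :: nat and a :: "nat \<Rightarrow> nat \<Rightarrow> real"
  assumes n1: "n \<ge> 1"
    and Jsq: "\<forall>X. hvec n X \<longrightarrow> Jop n a (Jop n a X) = (\<lambda>k. - X k)"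
    and Jorth: "\<forall>X Y. hvec n X \<longrightarrow> hvec n Y \<longrightarrow>
                   hmetric n (Jop n a X) (Jop n a Y) = hmetric n X Y"
  shows "(\<forall>X Y Z. hvec n X \<longrightarrow> hvec n Y \<longrightarrow> hvec n Z \<longrightarrow>
             d2 n (kahler_form n a) X Y Z = 0)
     \<longleftrightarrow>
         ((\<forall>i\<in>{1..n+1}. \<forall>j\<in>{1..n+1}. a i j = 0)
        \<and> (\<forall>i\<in>{1..n+1}. \<forall>j\<in>{1..n+1}. a (n+1+i) (n+1+j) = 0)
        \<and> (\<forall>i\<in>{1..n+1}. \<forall>j\<in>{1..n+1}. a (n+1+j) i = - a i (n+1+j))
        \<and> (\<forall>i\<in>{1..n+1}. \<forall>k\<in>{1..n+1}.
              (\<Sum>j\<in>{1..n+1}. a i (n+1+j) * a k (n+1+j)) = (if i = k then 1 else 0))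
        \<and> (\<forall>i\<in>{1..n+1}. \<forall>k\<in>{1..n+1}.
              (\<Sum>j\<in>{1..n+1}. a j (n+1+i) * a j (n+1+k)) = (if i = k then 1 else 0))
        \<and> (\<forall>i\<in>{1..n}. \<forall>j\<in>{1..n}. a i (n+1+j) = a j (n+1+i)))"
proof -
  let ?M = "{1..n+1}"
  have skew: "skew_symmetric_on {1..dimh n} a"
    using matrix_of_orthogonal_complex_structure[OF Jsq Jorth]
    by (intro skew_symmetric_if_orthogonal_square_minus_one) auto
  then have skew': "skew_symmetric_on {1..2*(n+1)} a"
    by (simp only: dimh_eq)
  have orth': "(\<Sum>l\<in>{1..2*(n+1)}. a p l * a q l) = (if p = q then 1 else 0)"
    if "p \<in> {1..2*(n+1)}" "q \<in> {1..2*(n+1)}" for p q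
    using matrix_of_orthogonal_complex_structure(2)[OF Jsq Jorth, of p q] that
    by (simp only: dimh_eq)
  note lower_right = kahler_closed_lower_right_zero[OF skew]
  have upper_left: "a i j = 0"
    and rows: "(\<Sum>l\<in>?M. a i (n+1+l) * a j (n+1+l)) = (if i = j then 1 else 0)"
    and columns: "(\<Sum>l\<in>?M. a l (n+1+i) * a l (n+1+j)) = (if i = j then 1 else 0)"
    if "kahler_closed n a" "i \<in> ?M" "j \<in> ?M" for i j
    using upper_left_block_zero[OF skew' orth' lower_right[OF that(1)]]
      upper_right_rows_orthonormal[OF skew' orth' lower_right[OF that(1)]]
      upper_right_columns_orthonormal[OF skew' orth' lower_right[OF that(1)]] that(2,3)
    by auto
  have skew_blocks: "a (n+1+j) i = - a i (n+1+j)" if "i \<in> ?M" "j \<in> ?M" for i j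
    using that by (intro skew_symmetric_onD[OF skew]) (auto simp: dimh_def)
  show ?thesis
    unfolding kahler_closed_def[symmetric]
    using upper_left lower_right skew_blocks rows columns kahler_closed_symmetric_block[OF skew]
    by (auto intro!: kahler_closed_if_blocks[OF skew])
qed

end
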